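(* Let $S\subseteq\mathbb{Z}$ and let $\mathbf{a}=(a_i)_{i=0}^n$ be any $n+1$ integers in $S$. Then for any $\mathcal{T}\subseteq\mathbb{N}$, the product $$\prod_{b\in\mathcal{T}}b^{\gamma(S,b,\mathbf{a})},\qquad \gamma(S,b,\mathbf{a}):=\sum_{0\le i<j\le n}\operatorname{ord}_b(a_i-a_j),$$ is a multiple of $0!_{S,\mathcal{T}}\,1!_{S,\mathcal{T}}\cdots n!_{S,\mathcal{T}}$.
   Context: $\mathbb{N}=\{0,1,2,\dots\}$. For an integer $b\ge0$ and $a\in\mathbb{Z}$ define $\operatorname{ord}_b(a):=\sup\{k\in\mathbb{N}: a\mathbb{Z}\subseteq b^k\mathbb{Z}\}$ (convention $0^0=1$); thus for $b\ge2$ it is the largest $k$ with $b^k\mid a$ ($+\infty$ for $a=0$), $\operatorname{ord}_0(a)=+\infty$ if $a=0$ and $0$ otherwise, and $\operatorname{ord}_1(a)=+\infty$. For nonempty $S\subseteq\mathbb{Z}$, a $b$-ordering of $S$ is a sequence $(a_i)_{i\ge0}$ in $S$ such that for each $i\ge1$, $a_i$ attains $\min_{a'\in S}\sum_{j=0}^{i-1}\operatorname{ord}_b(a'-a_j)$; the $b$-exponent sequence is $\alpha_k(S,b):=\sum_{j=0}^{k-1}\operatorname{ord}_b(a_k-a_j)$ for any $b$-ordering (independent of the choice). For $\mathcal{T}\subseteq\mathbb{N}$ the generalized factorial is $k!_{S,\mathcal{T}}:=\prod_{b\in\mathcal{T}}b^{\alpha_k(S,b)}$, with conventions $b^{+\infty}=0$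 for $b=0$ and $b\ge2$, $1^{+\infty}=1$, and $b^0=1$ for all $b\in\mathbb{N}$ (these conventions also apply to $b^{\gamma}$). *)

theory Defs
  imports Main "HOL-Library.Extended_Nat"
begin

text \<open>ord_b(a) = sup{k : aZ subseteq b^k Z}, valued in enat (infinity allowed).
  aZ subseteq b^k Z holds iff b^k divides a.\<close>
definition ordb :: "nat \<Rightarrow> int \<Rightarrow> enat" where
  "ordb b a = Sup (enat ` {k. (int b) ^ k dvd a})"

definition epow :: "nat \<Rightarrow> enat \<Rightarrow> nat" where
  "epow b e = (case e of enat m \<Rightarrow> b ^ m | \<infinity> \<Rightarrow> (if b = 1 then 1 else 0))"

text \<open>Product over a possibly infinite index set T of naturals: 0 if some factor is 0,
  otherwise the product of the factors different from 1 (which are finitely many in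
  all situations of interest).\<close>
definition prodT :: "nat set \<Rightarrow> (nat \<Rightarrow> nat) \<Rightarrow> nat" where
  "prodT T f = (if \<exists>b\<in>T. f b = 0 then 0 else prod f {b\<in>T. f b \<noteq> 1})"

definition b_ordering :: "int set \<Rightarrow> nat \<Rightarrow> (nat \<Rightarrow> int) \<Rightarrow> bool" where
  "b_ordering S b s \<longleftrightarrow> (\<forall>i. s i \<in> S) \<and>
     (\<forall>i\<ge>1. \<forall>a'\<in>S. (\<Sum>j<i. ordb b (s i - s j)) \<le> (\<Sum>j<i. ordb b (a' - s j)))"

definition alpha :: "int set \<Rightarrow> nat \<Rightarrow> nat \<Rightarrow> enat" where
  "alpha S b k = (let s = (SOME s. b_ordering S b s) in (\<Sum>j<k. ordb b (s k - s j)))"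

definition gfact :: "int set \<Rightarrow> nat set \<Rightarrow> nat \<Rightarrow> nat" where
  "gfact S T k = prodT T (\<lambda>b. epow b (alpha S b k))"

definition gamma :: "nat \<Rightarrow> nat \<Rightarrow> (nat \<Rightarrow> int) \<Rightarrow> enat" where
  "gamma n b a = (\<Sum>j\<in>{..n}. \<Sum>i<j. ordb b (a i - a j))"

end

theory Submission
  imports Defs
begin

text \<open>
  Comparing exponents base by base, it suffices to show that
  alpha_0(S,b) + ... + alpha_n(S,b) <= gamma(S,b,a) for every b; only finitely many b
  contribute a factor other than 0 or 1, namely divisors of some nonzero a_i - a_j.
  The proximity d(x,y) = ord_b(x - y) satisfies min(d(x,y), d(y,z)) <= d(x,z).
  For such d, a pigeonhole argument on the balls around one point shows that among
  n+1 points a_i and n points s_0, ..., s_(n-1) some a_m is in total at least as close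
  to the other a_i as to the s_j.  Removing a_m and using that the b-ordering chooses
  s_n to minimise the sum of d(x, s_j) over j < n, induction on n gives the inequality.
\<close>

lemma enat_le_ordb_iff: "enat k \<le> ordb b x \<longleftrightarrow> int b ^ k dvd x"
proof
  assume "int b ^ k dvd x"
  then show "enat k \<le> ordb b x" unfolding ordb_def by (intro Sup_upper) auto
next
  assume le: "enat k \<le> ordb b x"
  show "int b ^ k dvd x"
  proof (cases k)
    case (Suc k')
    with le have "enat k' < ordb b x" by (simp add: Suc_ile_eq)
    then obtain j where j: "int b ^ j dvd x" "k' < j" unfolding ordb_def less_Sup_iff by auto
    with Suc have "int b ^ k dvd int b ^ j" by (intro le_imp_power_dvd) auto
    with j show ?thesis using dvd_trans by blast
  qed simp
qed

lemma ordb_0 [simp]: "ordb b 0 = \<infinity>"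
proof (rule ccontr)
  assume "ordb b 0 \<noteq> \<infinity>"
  then obtain k where "ordb b 0 = enat k" by blast
  moreover have "enat (Suc k) \<le> ordb b 0" by (simp add: enat_le_ordb_iff)
  ultimately show False by simp
qed

lemma ordb_minus_commute: "ordb b (x - y) = ordb b (y - x)"
  unfolding ordb_def by (metis dvd_minus_iff minus_diff_eq)

lemma min_ordb_le_ordb_add: "min (ordb b x) (ordb b y) \<le> ordb b (x + y)"
proof (rule ccontr)
  assume "\<not> ?thesis"
  then have lt: "ordb b (x + y) < min (ordb b x) (ordb b y)" by (simp only: not_le)
  then obtain k where k: "ordb b (x + y) = enat k" by (cases "ordb b (x + y)") auto
  with lt have "enat (Suc k) \<le> ordb b x" "enat (Suc k) \<le> ordb b y"
    by (auto simp: Suc_ile_eq)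
  then have "int b ^ Suc k dvd x" "int b ^ Suc k dvd y"
    by (simp_all only: enat_le_ordb_iff)
  then have "enat (Suc k) \<le> ordb b (x + y)" by (simp add: enat_le_ordb_iff)
  with k show False by simp
qed

lemma ordb_nonzero_imp_le_abs:
  assumes "ordb b x \<noteq> 0" and "x \<noteq> 0"
  shows "b \<le> nat \<bar>x\<bar>"
proof -
  have "eSuc 0 \<le> ordb b x" using assms(1) by (intro ileI1) simp
  then have "enat 1 \<le> ordb b x" by (simp add: zero_enat_def eSuc_enat)
  then have "int b dvd x" by (simp add: enat_le_ordb_iff)
  then have "\<bar>int b\<bar> \<le> \<bar>x\<bar>" using assms(2) by (rule dvd_imp_le_int[rotated])
  then show ?thesis by simp
qed

section \<open>Ultrametric proximities\<close>

text \<open>Modelled on d x y = ord_b(x - y): larger values mean closer points, and 2^(-d) is a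
  pseudo-ultrametric.\<close>

definition ultra_proximity :: "('x \<Rightarrow> 'x \<Rightarrow> enat) \<Rightarrow> bool" where
  "ultra_proximity d \<longleftrightarrow>
     (\<forall>x y. d x y = d y x) \<and> (\<forall>x y z. min (d x y) (d y z) \<le> d x z) \<and> (\<forall>x. d x x = \<infinity>)"

lemma ultra_proximity_ordb: "ultra_proximity (\<lambda>x y. ordb b (x - y))"
proof -
  have "min (ordb b (x - y)) (ordb b (y - z)) \<le> ordb b (x - z)" for x y z
    using min_ordb_le_ordb_add[of b "x - y" "y - z"] by simp
  then show ?thesis unfolding ultra_proximity_def by (simp add: ordb_minus_commute)
qed

lemma ultra_proximity_diff:
  assumes "ultra_proximity d"
  shows "ultra_proximity (\<lambda>x y. d x y - enat t)"
proof -
  have mono: "u - enat t \<le> v - enat t" if "u \<le> v" for u v :: enat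
    using that by (cases u; cases v) auto
  have "min (d x y - enat t) (d y z - enat t) \<le> d x z - enat t" for x y z
  proof -
    have "d x y \<le> d x z \<or> d y z \<le> d x z"
      using assms unfolding ultra_proximity_def by (metis min_le_iff_disj)
    then show ?thesis using mono by (meson min.coboundedI1 min.coboundedI2)
  qed
  with assms show ?thesis unfolding ultra_proximity_def by simp
qed

lemma ultra_proximity_level:
  assumes d: "ultra_proximity d" and x: "t \<le> d c x" and y: "t \<le> d c y"
  shows "t \<le> d x y" and "(t < d c x) \<noteq> (t < d c y) \<Longrightarrow> d x y = t"
proof -
  have sym: "d u v = d v u" and tri: "min (d u v) (d v w) \<le> d u w" for u v w
    using d unfolding ultra_proximity_def by blast+
  have "min (d x c) (d c y) \<le> d x y" by (rule tri)
  with x y sym show "t \<le> d x y" by (metis min.bounded_iff order.trans)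
  have isosceles: "d u v = t" if "t < d c u" "d c v = t" for u v
  proof -
    have "min (d c u) (d u v) \<le> d c v" by (rule tri)
    moreover have "min (d u c) (d c v) \<le> d u v" by (rule tri)
    ultimately show ?thesis using that sym by (auto simp: min_def split: if_splits)
  qed
  assume "(t < d c x) \<noteq> (t < d c y)"
  with x y have "t < d c x \<and> d c y = t \<or> t < d c y \<and> d c x = t" by auto
  then show "d x y = t" using isosceles sym by metis
qed

lemma card_filter_add_card_filter_not:
  "finite A \<Longrightarrow> card {x\<in>A. P x} + card {x\<in>A. \<not> P x} = card A"
  using card_Int_Diff[of A "{x. P x}"] by (simp add: Int_def set_diff_eq conj_commute)

lemma sum_enat_split_level:
  fixes f :: "'a \<Rightarrow> enat"
  assumes "finite A" and "\<And>x. x \<in> A \<Longrightarrow> enat t \<le> f x"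
    and "\<And>x. x \<in> A \<Longrightarrow> \<not> P x \<Longrightarrow> f x = enat t"
  shows "(\<Sum>x\<in>A. f x) = (\<Sum>x\<in>{x\<in>A. P x}. f x - enat t) + of_nat (card A) * enat t"
proof -
  have "(\<Sum>x\<in>A. f x) = (\<Sum>x\<in>A. (f x - enat t) + enat t)"
  proof (intro sum.cong refl)
    fix x assume "x \<in> A"
    then have "enat t \<le> f x" by (rule assms(2))
    then show "f x = f x - enat t + enat t" by (cases "f x") auto
  qed
  also have "\<dots> = (\<Sum>x\<in>A. f x - enat t) + of_nat (card A) * enat t"
    by (simp add: sum.distrib)
  also have "(\<Sum>x\<in>A. f x - enat t) = (\<Sum>x\<in>A. if P x then f x - enat t else 0)"
    using assms(3) by (intro sum.cong) (auto simp: zero_enat_def)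
  also have "\<dots> = (\<Sum>x\<in>{x\<in>A. P x}. f x - enat t)"
    using assms(1) by (simp add: sum.inter_filter)
  finally show ?thesis .
qed

lemma ultra_proximity_sum_split:
  fixes d :: "'x \<Rightarrow> 'x \<Rightarrow> enat" and s :: "'j \<Rightarrow> 'x"
  assumes d: "ultra_proximity d" and "finite J" and x: "enat t \<le> d c x"
    and s: "\<And>j. j \<in> J \<Longrightarrow> enat t \<le> d c (s j)"
  shows "(\<Sum>j\<in>J. d x (s j))
    = (\<Sum>j\<in>{j\<in>J. (enat t < d c (s j)) = (enat t < d c x)}. d x (s j) - enat t)
      + of_nat (card J) * enat t"
  using assms(2) ultra_proximity_level[OF d x s] by (intro sum_enat_split_level) auto

lemma ex_part_card_less:
  fixes p :: "'i \<Rightarrow> bool" and q :: "'j \<Rightarrow> bool"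
  assumes fin: "finite I" "finite J" and "card J < card I"
    and "\<exists>i\<in>I. p i" and "(\<exists>i\<in>I. \<not> p i) \<or> (\<exists>j\<in>J. \<not> q j)"
  shows "\<exists>Q. card {j\<in>J. q j = Q} < card {i\<in>I. p i = Q}
    \<and> card {i\<in>I. p i = Q} + card {j\<in>J. q j = Q} < card I + card J"
proof -
  have I: "card {i\<in>I. p i} + card {i\<in>I. \<not> p i} = card I"
    and J: "card {j\<in>J. q j} + card {j\<in>J. \<not> q j} = card J"
    using fin by (simp_all add: card_filter_add_card_filter_not)
  have pos_true: "card {i\<in>I. p i} > 0" using assms(4) fin(1) by (auto simp: card_gt_0_iff)
  have pos_false: "card {i\<in>I. \<not> p i} + card {j\<in>J. \<not> q j} > 0"
    using assms(5) fin by (auto simp: card_gt_0_iff)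
  have "card {j\<in>J. q j} < card {i\<in>I. p i} \<or> card {j\<in>J. \<not> q j} < card {i\<in>I. \<not> p i}"
    using I J assms(3) by linarith
  then show ?thesis
  proof
    assume "card {j\<in>J. q j} < card {i\<in>I. p i}"
    with I J pos_false show ?thesis by (intro exI[of _ True]) (simp (no_asm), linarith)
  next
    assume "card {j\<in>J. \<not> q j} < card {i\<in>I. \<not> p i}"
    with I J pos_true show ?thesis by (intro exI[of _ False]) (simp (no_asm), linarith)
  qed
qed

lemma ultra_proximity_sum_le_lift:
  fixes d :: "'x \<Rightarrow> 'x \<Rightarrow> enat" and a :: "'i \<Rightarrow> 'x" and s :: "'j \<Rightarrow> 'x"
  assumes d: "ultra_proximity d" and fin: "finite I" "finite J" and "card J < card I" and m: "m \<in> I"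
    and a: "\<And>i. i \<in> I \<Longrightarrow> enat t \<le> d c (a i)" and s: "\<And>j. j \<in> J \<Longrightarrow> enat t \<le> d c (s j)"
    and le: "(\<Sum>j\<in>{j\<in>J. (enat t < d c (s j)) = (enat t < d c (a m))}. d (a m) (s j) - enat t)
      \<le> (\<Sum>i\<in>{i\<in>I. (enat t < d c (a i)) = (enat t < d c (a m))} - {m}. d (a m) (a i) - enat t)"
  shows "(\<Sum>j\<in>J. d (a m) (s j)) \<le> (\<Sum>i\<in>I-{m}. d (a m) (a i))"
proof -
  have "(\<Sum>j\<in>J. d (a m) (s j))
      = (\<Sum>j\<in>{j\<in>J. (enat t < d c (s j)) = (enat t < d c (a m))}. d (a m) (s j) - enat t)
        + of_nat (card J) * enat t"
    using ultra_proximity_sum_split[OF d fin(2) a[OF m] s] .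
  also have "\<dots> \<le> (\<Sum>i\<in>{i\<in>I. (enat t < d c (a i)) = (enat t < d c (a m))} - {m}. d (a m) (a i) - enat t)
      + of_nat (card (I - {m})) * enat t"
    using le assms(4) m fin by (intro add_mono mult_right_mono) auto
  also have "\<dots> = (\<Sum>i\<in>I-{m}. d (a m) (a i))"
  proof -
    have "{i\<in>I-{m}. (enat t < d c (a i)) = (enat t < d c (a m))}
        = {i\<in>I. (enat t < d c (a i)) = (enat t < d c (a m))} - {m}" by auto
    with ultra_proximity_sum_split[OF d _ a[OF m], of "I - {m}" a] fin a show ?thesis by simp
  qed
  finally show ?thesis .
qed

text \<open>
  Let t be the least proximity from c = a i0 to the other points.  Points closer than t
  to c are at proximity exactly t from the remaining ones, and all proximities are at
  least t, so subtracting t reduces the claim to one of these two parts, chosen such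
  that J is still outnumbered by I there.
\<close>

lemma ex_point_closer_to_own_family:
  fixes d :: "'x \<Rightarrow> 'x \<Rightarrow> enat" and a :: "'i \<Rightarrow> 'x" and s :: "'j \<Rightarrow> 'x"
  assumes "ultra_proximity d" and "finite I" and "finite J" and "card J < card I"
  shows "\<exists>m\<in>I. (\<Sum>j\<in>J. d (a m) (s j)) \<le> (\<Sum>i\<in>I-{m}. d (a m) (a i))"
  using assms
proof (induction "card I + card J" arbitrary: d I J rule: less_induct)
  case less
  note d = less.prems(1) and fin = less.prems(2,3) and card_less = less.prems(4)
  have refl: "d x x = \<infinity>" for x
    using d unfolding ultra_proximity_def by blast
  obtain i0 where i0: "i0 \<in> I" using card_less by fastforce
  show ?case
  proof (cases "J = {}")
    case True
    with i0 show ?thesis by auto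
  next
    case J: False
    define c where "c = a i0"
    define P where "P = a ` (I - {i0}) \<union> s ` J"
    define t where "t = Min (d c ` P)"
    have "t \<in> d c ` P" unfolding t_def P_def using fin J by (intro Min_in) auto
    then obtain x0 where x0: "x0 \<in> P" "d c x0 = t" by blast
    have t_le: "t \<le> d c x" if "x \<in> P" for x
      unfolding t_def using that fin by (intro Min_le) (auto simp: P_def)
    have t_le_a: "t \<le> d c (a i)" if "i \<in> I" for i
      using t_le[of "a i"] that refl unfolding c_def P_def by (cases "i = i0") auto
    have t_le_s: "t \<le> d c (s j)" if "j \<in> J" for j
      using t_le[of "s j"] that unfolding P_def by auto
    show ?thesis
    proof (cases t)
      case infinity
      have "card J > 0" using J fin by auto
      then have "card (I - {i0}) > 0" using i0 card_less by simp
      then obtain i1 where i1: "i1 \<in> I - {i0}" by (metis card_gt_0_iff ex_in_conv)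
      have "d (a i0) (a i1) = \<infinity>" using t_le_a[of i1] i1 infinity unfolding c_def by simp
      then have "\<infinity> \<le> (\<Sum>i\<in>I-{i0}. d (a i0) (a i))"
        using i1 fin by (metis finite_Diff member_le_sum zero_le)
      with i0 show ?thesis by (intro bexI[of _ i0]) (simp add: top_unique)
    next
      case (enat t0)
      have t0_le_a: "enat t0 \<le> d c (a i)" if "i \<in> I" for i using t_le_a[OF that] by (simp add: enat)
      have t0_le_s: "enat t0 \<le> d c (s j)" if "j \<in> J" for j using t_le_s[OF that] by (simp add: enat)
      define near where "near x \<longleftrightarrow> enat t0 < d c x" for x
      have "near (a i0)" using refl by (simp add: near_def c_def)
      moreover have "\<not> near x0" using x0 enat by (simp add: near_def)
      ultimately obtain Q where
        "card {j\<in>J. near (s j) = Q} < card {i\<in>I. near (a i) = Q}" and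
        "card {i\<in>I. near (a i) = Q} + card {j\<in>J. near (s j) = Q} < card I + card J"
        using ex_part_card_less[OF fin card_less, of "\<lambda>i. near (a i)" "\<lambda>j. near (s j)"] i0 x0(1)
        unfolding P_def by blast
      from less.hyps[OF this(2) ultra_proximity_diff[OF d] _ _ this(1)] fin obtain m where
        m: "m \<in> I" "near (a m) = Q" and
        le: "(\<Sum>j\<in>{j\<in>J. near (s j) = Q}. d (a m) (s j) - enat t0)
          \<le> (\<Sum>i\<in>{i\<in>I. near (a i) = Q} - {m}. d (a m) (a i) - enat t0)"
        by auto
      show ?thesis
        using ultra_proximity_sum_le_lift[where a = a and s = s, OF d fin card_less m(1) t0_le_a t0_le_s]
          le[folded m(2), unfolded near_def] m(1) by blast
    qed
  qed
qed

section \<open>Greedy sequences\<close>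

definition sum_pairs :: "('x \<Rightarrow> 'x \<Rightarrow> 'b::comm_monoid_add) \<Rightarrow> ('i::linorder \<Rightarrow> 'x) \<Rightarrow> 'i set \<Rightarrow> 'b" where
  "sum_pairs d a I = (\<Sum>j\<in>I. \<Sum>i\<in>{i\<in>I. i < j}. d (a i) (a j))"

lemma sum_pairs_remove:
  assumes "finite I" and "m \<in> I" and sym: "\<And>x y. d x y = d y x"
  shows "sum_pairs d a I = sum_pairs d a (I - {m}) + (\<Sum>i\<in>I-{m}. d (a m) (a i))"
proof -
  define f where "f i j = (if i < j then d (a i) (a j) else 0)" for i j
  define I' where "I' = I - {m}"
  have I: "I = insert m I'" "m \<notin> I'" "finite I'" using assms(1,2) by (auto simp: I'_def)
  have pairs: "sum_pairs d a J = (\<Sum>j\<in>J. \<Sum>i\<in>J. f i j)" if "finite J" for J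
    unfolding sum_pairs_def f_def using that by (simp add: sum.inter_filter)
  have "f m m = 0" by (simp add: f_def)
  with I have "(\<Sum>j\<in>I. \<Sum>i\<in>I. f i j) = (\<Sum>j\<in>I'. \<Sum>i\<in>I'. f i j) + (\<Sum>i\<in>I'. f i m + f m i)"
    by (simp add: sum.distrib ac_simps)
  also have "(\<Sum>i\<in>I'. f i m + f m i) = (\<Sum>i\<in>I'. d (a m) (a i))"
    using I(2) by (intro sum.cong) (auto simp: f_def sym)
  finally show ?thesis using assms(1) I(3) by (simp add: pairs I'_def)
qed

lemma greedy_sum_le_sum_pairs:
  fixes d :: "'x \<Rightarrow> 'x \<Rightarrow> enat" and s :: "nat \<Rightarrow> 'x" and a :: "'i::linorder \<Rightarrow> 'x"
  assumes d: "ultra_proximity d"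
    and greedy: "\<And>k x. x \<in> S \<Longrightarrow> (\<Sum>j<k. d (s k) (s j)) \<le> (\<Sum>j<k. d x (s j))"
    and "finite I" and "a ` I \<subseteq> S"
  shows "(\<Sum>k<card I. \<Sum>j<k. d (s k) (s j)) \<le> sum_pairs d a I"
  using assms(3,4)
proof (induction "card I" arbitrary: I)
  case 0
  then show ?case by simp
next
  case (Suc n)
  obtain m where m: "m \<in> I" and closer: "(\<Sum>j<n. d (a m) (s j)) \<le> (\<Sum>i\<in>I-{m}. d (a m) (a i))"
    using ex_point_closer_to_own_family[OF d Suc.prems(1), of "{..<n}" a s] Suc.hyps(2) by auto
  have sym: "d x y = d y x" for x y using d by (simp add: ultra_proximity_def)
  have "(\<Sum>k<card I. \<Sum>j<k. d (s k) (s j)) = (\<Sum>k<n. \<Sum>j<k. d (s k) (s j)) + (\<Sum>j<n. d (s n) (s j))"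
    by (simp flip: Suc.hyps(2))
  also have "\<dots> \<le> sum_pairs d a (I - {m}) + (\<Sum>i\<in>I-{m}. d (a m) (a i))"
  proof (rule add_mono)
    show "(\<Sum>k<n. \<Sum>j<k. d (s k) (s j)) \<le> sum_pairs d a (I - {m})"
      using Suc.hyps(1)[of "I - {m}"] Suc.prems m by (auto simp flip: Suc.hyps(2))
    have "(\<Sum>j<n. d (s n) (s j)) \<le> (\<Sum>j<n. d (a m) (s j))"
      using greedy m Suc.prems(2) by blast
    also note closer
    finally show "(\<Sum>j<n. d (s n) (s j)) \<le> (\<Sum>i\<in>I-{m}. d (a m) (a i))" .
  qed
  also have "\<dots> = sum_pairs d a I"
    using sum_pairs_remove[where d = d, OF Suc.prems(1) m sym] by simp
  finally show ?case .
qed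

definition greedy_pick :: "'x set \<Rightarrow> ('x list \<Rightarrow> 'x \<Rightarrow> 'b::wellorder) \<Rightarrow> 'x list \<Rightarrow> 'x" where
  "greedy_pick S c L = (SOME x. x \<in> S \<and> (\<forall>y\<in>S. c L x \<le> c L y))"

primrec greedy_prefix :: "'x set \<Rightarrow> ('x list \<Rightarrow> 'x \<Rightarrow> 'b::wellorder) \<Rightarrow> nat \<Rightarrow> 'x list" where
  "greedy_prefix S c 0 = []"
| "greedy_prefix S c (Suc k) = greedy_prefix S c k @ [greedy_pick S c (greedy_prefix S c k)]"

lemma greedy_pick_minimal:
  assumes "S \<noteq> {}"
  shows "greedy_pick S c L \<in> S \<and> (\<forall>y\<in>S. c L (greedy_pick S c L) \<le> c L y)"
proof -
  obtain x where x: "x \<in> S" "c L x = (LEAST v. \<exists>y\<in>S. c L y = v)"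
    using LeastI_ex[of "\<lambda>v. \<exists>y\<in>S. c L y = v"] assms by blast
  then have "\<forall>y\<in>S. c L x \<le> c L y" by (auto intro: Least_le)
  with x(1) show ?thesis unfolding greedy_pick_def by (rule someI[where x = x, OF conjI])
qed

lemma greedy_sequence_exists:
  fixes c :: "'x list \<Rightarrow> 'x \<Rightarrow> 'b::wellorder"
  assumes "S \<noteq> {}"
  shows "\<exists>s. \<forall>k. s k \<in> S \<and> (\<forall>y\<in>S. c (map s [0..<k]) (s k) \<le> c (map s [0..<k]) y)"
proof -
  define s where "s k = greedy_pick S c (greedy_prefix S c k)" for k
  have "greedy_prefix S c k = map s [0..<k]" for k
    by (induction k) (simp_all add: s_def)
  then show ?thesis using greedy_pick_minimal[OF assms, of c] unfolding s_def by metis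
qed

lemma b_ordering_exists:
  assumes "S \<noteq> {}"
  shows "\<exists>s. b_ordering S b s"
proof -
  obtain s where s: "\<And>k. s k \<in> S"
    "\<And>k y. y \<in> S \<Longrightarrow> (\<Sum>x\<leftarrow>map s [0..<k]. ordb b (s k - x)) \<le> (\<Sum>x\<leftarrow>map s [0..<k]. ordb b (y - x))"
    using greedy_sequence_exists[OF assms, of "\<lambda>L z. \<Sum>x\<leftarrow>L. ordb b (z - x)"] by blast
  then have "b_ordering S b s"
    unfolding b_ordering_def by (simp add: interv_sum_list_conv_sum_set_nat atLeast0LessThan comp_def)
  then show ?thesis by blast
qed

lemma alpha_sum_le_gamma:
  assumes "\<forall>i\<le>n. a i \<in> S"
  shows "(\<Sum>k\<le>n. alpha S b k) \<le> gamma n b a"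
proof -
  define s where "s = (SOME s. b_ordering S b s)"
  have s: "b_ordering S b s"
    unfolding s_def using b_ordering_exists assms by (metis empty_iff order_refl someI_ex)
  have greedy: "(\<Sum>j<k. ordb b (s k - s j)) \<le> (\<Sum>j<k. ordb b (x - s j))" if "x \<in> S" for k x
  proof (cases "k = 0")
    case False
    then have "1 \<le> k" by simp
    with that s show ?thesis unfolding b_ordering_def by blast
  qed simp
  have "(\<Sum>k\<le>n. alpha S b k) = (\<Sum>k<card {..n}. \<Sum>j<k. ordb b (s k - s j))"
    by (simp add: alpha_def s_def Let_def lessThan_Suc_atMost)
  also have "\<dots> \<le> sum_pairs (\<lambda>x y. ordb b (x - y)) a {..n}"
    using assms by (intro greedy_sum_le_sum_pairs[OF ultra_proximity_ordb greedy]) auto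
  also have "\<dots> = gamma n b a"
    unfolding sum_pairs_def gamma_def by (intro sum.cong) (auto intro: sum.cong)
  finally show ?thesis .
qed

lemma epow_0 [simp]: "epow b 0 = 1"
  by (simp add: epow_def zero_enat_def)

lemma epow_add: "epow b (x + y) = epow b x * epow b y"
  by (cases x; cases y) (simp_all add: epow_def power_add)

lemma epow_sum: "epow b (\<Sum>k\<in>K. x k) = (\<Prod>k\<in>K. epow b (x k))"
  by (induction K rule: infinite_finite_induct) (simp_all add: epow_add)

lemma epow_dvd_epow:
  assumes "x \<le> y" and "epow b y \<noteq> 0"
  shows "epow b x dvd epow b y"
proof (cases "b = 1")
  case False
  with assms(2) obtain n where y: "y = enat n" by (cases y) (auto simp: epow_def)
  with assms(1) obtain m where "x = enat m" "m \<le> n" by (cases x) auto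
  with y show ?thesis by (simp add: epow_def le_imp_power_dvd)
qed (simp add: epow_def split: enat.split)

lemma ordb_le_gamma:
  assumes "i < j" and "j \<le> n"
  shows "ordb b (a i - a j) \<le> gamma n b a"
proof -
  have "ordb b (a i - a j) \<le> (\<Sum>i<j. ordb b (a i - a j))"
    using assms(1) by (intro member_le_sum) auto
  also have "\<dots> \<le> gamma n b a"
    unfolding gamma_def using assms(2) by (intro member_le_sum) auto
  finally show ?thesis .
qed

lemma finite_epow_gamma_gt_1: "finite {b. 1 < epow b (gamma n b a)}"
proof (rule finite_subset)
  show "finite (\<Union>i\<le>n. \<Union>j\<le>n. {..nat \<bar>a i - a j\<bar>})" by auto
  show "{b. 1 < epow b (gamma n b a)} \<subseteq> (\<Union>i\<le>n. \<Union>j\<le>n. {..nat \<bar>a i - a j\<bar>})"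
  proof
    fix b assume "b \<in> {b. 1 < epow b (gamma n b a)}"
    then have gt: "1 < epow b (gamma n b a)" by simp
    then obtain g where g: "gamma n b a = enat g"
      by (cases "gamma n b a") (auto simp: epow_def split: if_splits)
    with gt have "g \<noteq> 0" by (cases g) (auto simp: epow_def)
    with g have "gamma n b a \<noteq> 0" by (simp add: zero_enat_def)
    then obtain i j where ij: "i < j" "j \<le> n" and pos: "ordb b (a i - a j) \<noteq> 0"
      unfolding gamma_def by auto
    have "ordb b (a i - a j) \<noteq> \<infinity>"
      using ordb_le_gamma[OF ij, of b a] g by (cases "ordb b (a i - a j)") auto
    then have "a i - a j \<noteq> 0" by auto
    with pos have "b \<le> nat \<bar>a i - a j\<bar>" by (rule ordb_nonzero_imp_le_abs)
    with ij show "b \<in> (\<Union>i\<le>n. \<Union>j\<le>n. {..nat \<bar>a i - a j\<bar>})" by auto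
  qed
qed

lemma prod_prodT_dvd_prodT:
  fixes f :: "'k \<Rightarrow> nat \<Rightarrow> nat"
  assumes "finite K" and "finite {b\<in>T. 1 < g b}"
    and dvd: "\<And>b. b \<in> T \<Longrightarrow> g b \<noteq> 0 \<Longrightarrow> (\<Prod>k\<in>K. f k b) dvd g b"
  shows "(\<Prod>k\<in>K. prodT T (f k)) dvd prodT T g"
proof (cases "\<exists>b\<in>T. g b = 0")
  case False
  define F where "F = {b\<in>T. g b \<noteq> 1}"
  have "F = {b\<in>T. 1 < g b}" using False by (auto simp: F_def)
  with assms(2) have fin: "finite F" by simp
  have factor_dvd: "f k b dvd g b" if "b \<in> T" "k \<in> K" for b k
    using dvd_prodI[OF assms(1) that(2)] dvd[OF that(1)] False that(1) by (meson dvd_trans)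
  have "prodT T (f k) = (\<Prod>b\<in>F. f k b)" if "k \<in> K" for k
  proof -
    have "f k b \<noteq> 0" "g b = 1 \<Longrightarrow> f k b = 1" if "b \<in> T" for b
      using factor_dvd[OF that \<open>k \<in> K\<close>] False that by (metis dvd_0_left, simp)
    then show ?thesis
      unfolding prodT_def using fin by (auto simp: F_def intro!: prod.mono_neutral_left)
  qed
  then have "(\<Prod>k\<in>K. prodT T (f k)) = (\<Prod>b\<in>F. \<Prod>k\<in>K. f k b)"
    using prod.swap[of "\<lambda>k b. f k b" F K] by (simp cong: prod.cong)
  also have "\<dots> dvd (\<Prod>b\<in>F. g b)"
    using dvd False by (intro prod_dvd_prod) (auto simp: F_def)
  also have "\<dots> = prodT T g" unfolding prodT_def F_def by (simp only: if_not_P[OF False])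
  finally show ?thesis .
qed (simp add: prodT_def)

theorem theorem3p15:
  fixes S :: "int set" and T :: "nat set" and n :: nat and a :: "nat \<Rightarrow> int"
  assumes "\<forall>i\<le>n. a i \<in> S"
  shows "(\<Prod>k\<le>n. gfact S T k) dvd prodT T (\<lambda>b. epow b (gamma n b a))"
  unfolding gfact_def
proof (rule prod_prodT_dvd_prodT)
  show "finite {b\<in>T. 1 < epow b (gamma n b a)}"
    using finite_epow_gamma_gt_1[of n a] by (rule finite_subset[rotated]) auto
  fix b assume "epow b (gamma n b a) \<noteq> 0"
  with alpha_sum_le_gamma[OF assms] have "epow b (\<Sum>k\<le>n. alpha S b k) dvd epow b (gamma n b a)"
    by (rule epow_dvd_epow)
  then show "(\<Prod>k\<le>n. epow b (alpha S b k)) dvd epow b (gamma n b a)"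
    by (simp add: epow_sum)
qed simp

end
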